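(* Assume every $f_i$ ($i=1,\dots,q$) and every $g_j$ ($j=1,\dots,m$) is Lipschitz continuous with respect to the continuous variables. Let $x^\star\in\mathcal F$ be a local Pareto optimum of problem (P). Assume that there exists a direction $d\in D^c(x^\star)$ such that, for every $j\in\{1,\dots,m\}$ with $g_j(x^\star)=0$, $$(\xi^{g_j})^\top d<0\quad\text{for all }\xi^{g_j}\in\partial_c g_j(x^\star).$$ Then $x^\star$ is a Pareto stationary point of problem (P).
   Context: Fix integers $n,q\ge 1$ and $m\ge 0$. Let $\{1,\dots,n\}=I^c\cup I^z$ with $I^c\cap I^z=\emptyset$ and $I^c,I^z\neq\emptyset$. For $x\in\mathbb R^n$ write $x_c=(x_i)_{i\in I^c}$ and $x_z=(x_i)_{i\in I^z}$. Let $l,u\in\mathbb R^n$ with $l_i<u_i$ for all $i$ and $l_i,u_i\in\mathbb Z$ for $i\in I^z$. Put $X=\{x\in\mathbb R^n: l_i\le x_i\le u_i,\ i=1,\dots,n\}$ and $\mathcal Z=\{x\in\mathbb R^n: x_i\in\mathbb Z \text{ for } i\in I^z\}$. Let $f_1,\dots,f_q,g_1,\dots,g_m:\mathbb R^n\to\mathbb R$ and $F=(f_1,\dots,f_q)^\top$. Problem (P) is: minimize $F(x)$ subject to $g_j(x)\le 0$ ($j=1,\dots,m$), $x\in X\cap\mathcal Z$; its feasible set is $\mathcal F=\{x\in X\cap\mathcal Z: g_j(x)\le 0,\ j=1,\dots,m\}$. A function $h:\mathbb R^n\to\mathbb R$ is Lipschitz continuous with respect to the continuous variables if there is $L_h$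 with $|h(x)-h(y)|\le L_h\|x-y\|$ for all $x,y\in\mathbb R^n$ with $x_i=y_i$ for all $i\in I^z$. For such $h$, $x\in\mathbb R^n$ and $s\in\mathbb R^n$ with $s_i=0$ for $i\in I^z$, the generalized directional derivative is $h^{Cl}_c(x;s)=\limsup_{y_c\to x_c,\ y_z=x_z,\ t\downarrow 0}\frac{h(y+ts)-h(y)}{t}$, and the generalized gradient with respect to the continuous variables is $\partial_c h(x)=\{v\in\mathbb R^n: v_i=0\ \forall i\in I^z,\ h^{Cl}_c(x;s)\ge s^\top v\ \forall s\in\mathbb R^n \text{ with } s_i=0\ \forall i\in I^z\}$. For $x\in X\cap\mathcal Z$, the cone of feasible continuous directions is $D^c(x)=\{s\in\mathbb R^n: s_i=0\ (i\in I^z);\ s_i\ge 0\ (i\in I^c,\ x_i=l_i);\ s_i\le 0\ (i\in I^c,\ x_i=u_i);\ s_i\in\mathbb R\ (i\in I^c,\ l_i<x_i<u_i)\}$. Vector order: for $a,b\in\mathbb R^q$, $a\le b$ means $a_i\le b_i$ for all $i$ and $a\ne b$. For $x\in X\cap\mathcal Z$, the set of feasible primitive directions is $D^z(x)=\{d\in\mathbb Z^n: d_i=0\ \forall i\in I^c,\ \gcd\{d_i: i\in I^z\}=1,\ x+d\in X\cap\mathcal Z\}$; the discrete neighborhood is $\mathcal B^z(x)=\{x+d: d\in D^z(x)\}$, and for $\rho>0$ the continuous neighborhood is $\mathcal B^c(x;\rho)=\{y\in X: y_z=x_z,\ \|y_c-x_c\|\le\rho\}$. A point $x^\star\in\mathcal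 F$ is a local Pareto optimum of (P) if (1) there is no $y\in\mathcal B^z(x^\star)\cap\mathcal F$ with $F(y)\le F(x^\star)$, and (2) for some $\rho>0$ there is no $y\in\mathcal B^c(x^\star;\rho)\cap\mathcal F$ with $F(y)\le F(x^\star)$. A point $x^\star\in\mathcal F$ is Pareto-Clarke stationary w.r.t. the continuous variables for (P) if there exist $\sigma\in\mathbb R^q$ with $\sigma\ge 0$ componentwise and $\sigma\ne 0$, and $\lambda\in\mathbb R^m$ with $\lambda_j\ge0$ and $\lambda_j g_j(x^\star)=0$ for all $j$, and a vector $\bar\xi\in\sum_{i=1}^q\sigma_i\partial_c f_i(x^\star)+\sum_{j=1}^m\lambda_j\partial_c g_j(x^\star)$ (Minkowski sum) such that $\bar\xi^\top d\ge 0$ for every $d\in D^c(x^\star)$. A point $x^\star\in\mathcal F$ is Pareto stationary for (P) if it is Pareto-Clarke stationary w.r.t. the continuous variables and satisfies condition (1) of local Pareto optimality (no $y\in\mathcal B^z(x^\star)\cap\mathcal F$ with $F(y)\le F(x^\star)$). *)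

theory Defs
  imports "HOL-Analysis.Analysis" "HOL-Library.Liminf_Limsup"
begin

text \<open>Points of R^n are vectors of type real^'n; the index set {1..n} is the finite
type 'n, split into the continuous indices Ic and the integer indices Iz.
Objectives are f i for i < q, constraints g j for j < m.\<close>

definition box_set :: "real^'n \<Rightarrow> real^'n \<Rightarrow> (real^'n) set" where
  "box_set l u = {x. \<forall>i. l$i \<le> x$i \<and> x$i \<le> u$i}"

definition int_set :: "'n set \<Rightarrow> (real^'n) set" where
  "int_set Iz = {x. \<forall>i\<in>Iz. x$i \<in> \<int>}"

definition feasible_set :: "real^'n \<Rightarrow> real^'n \<Rightarrow> 'n set \<Rightarrow> nat \<Rightarrow> (nat \<Rightarrow> real^'n \<Rightarrow> real) \<Rightarrow> (real^'n) set" where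
  "feasible_set l u Iz m g = {x \<in> box_set l u \<inter> int_set Iz. \<forall>j<m. g j x \<le> 0}"

definition pareto_le :: "nat \<Rightarrow> (nat \<Rightarrow> real^'n \<Rightarrow> real) \<Rightarrow> real^'n \<Rightarrow> real^'n \<Rightarrow> bool" where
  "pareto_le q f y x \<longleftrightarrow> (\<forall>i<q. f i y \<le> f i x) \<and> (\<exists>i<q. f i y \<noteq> f i x)"

definition lipschitz_cont_vars :: "'n set \<Rightarrow> (real^'n \<Rightarrow> real) \<Rightarrow> bool" where
  "lipschitz_cont_vars Iz h \<longleftrightarrow>
     (\<exists>L. \<forall>x y. (\<forall>i\<in>Iz. x$i = y$i) \<longrightarrow> \<bar>h x - h y\<bar> \<le> L * norm (x - y))"

definition clarke_dd :: "'n set \<Rightarrow> (real^'n \<Rightarrow> real) \<Rightarrow> real^'n \<Rightarrow> real^'n \<Rightarrow> ereal" where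
  "clarke_dd Iz h x s =
     Limsup ((inf (nhds x) (principal {y. \<forall>i\<in>Iz. y$i = x$i})) \<times>\<^sub>F at_right 0)
       (\<lambda>(y, t). ereal ((h (y + t *\<^sub>R s) - h y) / t))"

definition clarke_grad :: "'n set \<Rightarrow> (real^'n \<Rightarrow> real) \<Rightarrow> real^'n \<Rightarrow> (real^'n) set" where
  "clarke_grad Iz h x = {v. (\<forall>i\<in>Iz. v$i = 0) \<and>
      (\<forall>s. (\<forall>i\<in>Iz. s$i = 0) \<longrightarrow> ereal (s \<bullet> v) \<le> clarke_dd Iz h x s)}"

definition cont_dirs :: "real^'n \<Rightarrow> real^'n \<Rightarrow> 'n set \<Rightarrow> 'n set \<Rightarrow> real^'n \<Rightarrow> (real^'n) set" where
  "cont_dirs l u Ic Iz x = {s. (\<forall>i\<in>Iz. s$i = 0) \<and>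
      (\<forall>i\<in>Ic. x$i = l$i \<longrightarrow> s$i \<ge> 0) \<and>
      (\<forall>i\<in>Ic. x$i = u$i \<longrightarrow> s$i \<le> 0)}"

definition prim_dirs :: "real^'n \<Rightarrow> real^'n \<Rightarrow> 'n set \<Rightarrow> 'n set \<Rightarrow> real^'n \<Rightarrow> (real^'n) set" where
  "prim_dirs l u Ic Iz x = {d. (\<forall>i. d$i \<in> \<int>) \<and> (\<forall>i\<in>Ic. d$i = 0) \<and>
      Gcd ((\<lambda>i. \<lfloor>d$i\<rfloor>) ` Iz) = (1::int) \<and>
      x + d \<in> box_set l u \<inter> int_set Iz}"

definition disc_nbhd :: "real^'n \<Rightarrow> real^'n \<Rightarrow> 'n set \<Rightarrow> 'n set \<Rightarrow> real^'n \<Rightarrow> (real^'n) set" where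
  "disc_nbhd l u Ic Iz x = {x + d | d. d \<in> prim_dirs l u Ic Iz x}"

definition cont_nbhd :: "real^'n \<Rightarrow> real^'n \<Rightarrow> 'n set \<Rightarrow> 'n set \<Rightarrow> real^'n \<Rightarrow> real \<Rightarrow> (real^'n) set" where
  "cont_nbhd l u Ic Iz x \<rho> = {y \<in> box_set l u. (\<forall>i\<in>Iz. y$i = x$i) \<and>
      sqrt (\<Sum>i\<in>Ic. (y$i - x$i)\<^sup>2) \<le> \<rho>}"

definition local_pareto_opt ::
  "real^'n \<Rightarrow> real^'n \<Rightarrow> 'n set \<Rightarrow> 'n set \<Rightarrow> nat \<Rightarrow> (nat \<Rightarrow> real^'n \<Rightarrow> real) \<Rightarrow>
   nat \<Rightarrow> (nat \<Rightarrow> real^'n \<Rightarrow> real) \<Rightarrow> real^'n \<Rightarrow> bool" where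
  "local_pareto_opt l u Ic Iz q f m g x \<longleftrightarrow>
     x \<in> feasible_set l u Iz m g \<and>
     \<not> (\<exists>y \<in> disc_nbhd l u Ic Iz x \<inter> feasible_set l u Iz m g. pareto_le q f y x) \<and>
     (\<exists>\<rho>>0. \<not> (\<exists>y \<in> cont_nbhd l u Ic Iz x \<rho> \<inter> feasible_set l u Iz m g. pareto_le q f y x))"

definition pareto_clarke_stationary ::
  "real^'n \<Rightarrow> real^'n \<Rightarrow> 'n set \<Rightarrow> 'n set \<Rightarrow> nat \<Rightarrow> (nat \<Rightarrow> real^'n \<Rightarrow> real) \<Rightarrow>
   nat \<Rightarrow> (nat \<Rightarrow> real^'n \<Rightarrow> real) \<Rightarrow> real^'n \<Rightarrow> bool" where
  "pareto_clarke_stationary l u Ic Iz q f m g x \<longleftrightarrow>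
     x \<in> feasible_set l u Iz m g \<and>
     (\<exists>(\<sigma>::nat \<Rightarrow> real) (lam::nat \<Rightarrow> real) vf vg.
        (\<forall>i<q. \<sigma> i \<ge> 0) \<and> (\<exists>i<q. \<sigma> i \<noteq> 0) \<and>
        (\<forall>j<m. lam j \<ge> 0 \<and> lam j * g j x = 0) \<and>
        (\<forall>i<q. vf i \<in> clarke_grad Iz (f i) x) \<and>
        (\<forall>j<m. vg j \<in> clarke_grad Iz (g j) x) \<and>
        (\<forall>d \<in> cont_dirs l u Ic Iz x.
           ((\<Sum>i<q. \<sigma> i *\<^sub>R vf i) + (\<Sum>j<m. lam j *\<^sub>R vg j)) \<bullet> d \<ge> 0))"

definition pareto_stationary ::
  "real^'n \<Rightarrow> real^'n \<Rightarrow> 'n set \<Rightarrow> 'n set \<Rightarrow> nat \<Rightarrow> (nat \<Rightarrow> real^'n \<Rightarrow> real) \<Rightarrow>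
   nat \<Rightarrow> (nat \<Rightarrow> real^'n \<Rightarrow> real) \<Rightarrow> real^'n \<Rightarrow> bool" where
  "pareto_stationary l u Ic Iz q f m g x \<longleftrightarrow>
     pareto_clarke_stationary l u Ic Iz q f m g x \<and>
     \<not> (\<exists>y \<in> disc_nbhd l u Ic Iz x \<inter> feasible_set l u Iz m g. pareto_le q f y x)"

end

theory Submission
  imports Defs
begin

text \<open>For a function that is Lipschitz in the continuous variables, the Clarke derivative
\<open>s \<mapsto> h\<^sup>\<circ>(x; s)\<close> is finite, subadditive and positively homogeneous on the subspace of continuous
directions, and (separating the point \<open>(a, h\<^sup>\<circ>(x; a) - \<epsilon>)\<close> from its epigraph) it is the support
function of the Clarke gradient. Let \<open>C\<close> be the convex hull of the Clarke gradients of all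
objectives and active constraints at \<open>x\<^sup>\<star>\<close>, a compact convex set. If \<open>C\<close> missed the dual cone
of \<open>D\<^sup>c(x\<^sup>\<star>)\<close>, separating the two would produce a direction \<open>a \<in> D\<^sup>c(x\<^sup>\<star>)\<close> on which every
gradient is uniformly negative; then all these Clarke derivatives are negative and moving a little
along \<open>a\<close> strictly decreases every objective while keeping all constraints feasible, against local
Pareto optimality. A point of \<open>C\<close> in the dual cone is a convex combination giving the multipliers,
and the constraint qualification forbids all the weight to lie on the constraints.\<close>

subsection \<open>Sublinear functions\<close>

lemma sublinear_minorant:
  fixes P :: "'a::euclidean_space \<Rightarrow> real"
  assumes subadd: "\<And>x y. P (x + y) \<le> P x + P y"
    and homog: "\<And>c x. c \<ge> 0 \<Longrightarrow> P (c *\<^sub>R x) = c * P x"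
    and \<epsilon>: "\<epsilon> > 0"
  obtains v where "\<And>x. x \<bullet> v \<le> P x" and "P a - \<epsilon> \<le> a \<bullet> v"
proof -
  have "convex_on UNIV P"
  proof
    fix t :: real and x y :: 'a assume "t > 0" "t < 1"
    then show "P ((1 - t) *\<^sub>R x + t *\<^sub>R y) \<le> (1 - t) * P x + t * P y"
      using subadd[of "(1 - t) *\<^sub>R x" "t *\<^sub>R y"] homog[of "1 - t" x] homog[of t y] by simp
  qed simp
  then have "convex (epigraph UNIV P)"
    by (rule convex_epigraphI)
  moreover have "{(a, P a - \<epsilon>)} \<inter> epigraph UNIV P = {}"
    using \<epsilon> by (simp add: mem_epigraph)
  moreover have "epigraph UNIV P \<noteq> {}"
    by (auto simp: epigraph_def)
  ultimately obtain \<gamma> c where "\<gamma> \<noteq> 0" and "\<forall>z\<in>{(a, P a - \<epsilon>)}. \<gamma> \<bullet> z \<le> c"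
    and "\<forall>z\<in>epigraph UNIV P. c \<le> \<gamma> \<bullet> z"
    using separating_hyperplane_sets[of "{(a, P a - \<epsilon>)}" "epigraph UNIV P"] by blast
  then have below: "\<gamma> \<bullet> (a, P a - \<epsilon>) \<le> c" and above: "\<And>z. z \<in> epigraph UNIV P \<Longrightarrow> c \<le> \<gamma> \<bullet> z"
    by auto
  obtain \<alpha> \<beta> where \<gamma>: "\<gamma> = (\<alpha>, \<beta>)" by fastforce
  have epi: "c \<le> \<alpha> \<bullet> w + \<beta> * r" if "P w \<le> r" for w r
    using above[of "(w, r)"] that by (simp add: \<gamma> mem_epigraph)
  have P0: "P 0 = 0"
    using homog[of 0 0] by simp
  have c0: "c \<le> 0"
    using epi[of 0 0] P0 by simp
  have hom: "0 \<le> \<alpha> \<bullet> w + \<beta> * P w" for w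
  proof (rule ccontr)
    assume "\<not> ?thesis"
    then have k: "\<alpha> \<bullet> w + \<beta> * P w < 0" by simp
    define t where "t = (\<bar>c\<bar> + 1) / - (\<alpha> \<bullet> w + \<beta> * P w)"
    have "t > 0"
      using k by (simp add: t_def divide_pos_pos)
    then have "c \<le> t * (\<alpha> \<bullet> w + \<beta> * P w)"
      using epi[of "t *\<^sub>R w" "t * P w"] homog[of t w] by (simp add: algebra_simps)
    also have "\<dots> = - (\<bar>c\<bar> + 1)"
      using k by (simp add: t_def field_simps)
    finally show False by linarith
  qed
  have "\<beta> * \<epsilon> \<ge> 0"
    using below epi[of a "P a"] by (simp add: \<gamma> algebra_simps)
  then have "\<beta> \<ge> 0"
    using \<epsilon> by (simp add: zero_le_mult_iff)
  moreover have "\<beta> \<noteq> 0"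
  proof
    assume "\<beta> = 0"
    then have "\<alpha> \<bullet> \<alpha> \<le> 0"
      using hom[of "- \<alpha>"] by simp
    then show False
      using \<open>\<gamma> \<noteq> 0\<close> \<open>\<beta> = 0\<close> by (metis \<gamma> inner_gt_zero_iff not_le zero_prod_def)
  qed
  ultimately have \<beta>: "\<beta> > 0" by simp
  show thesis
  proof
    show "x \<bullet> (- (1 / \<beta>) *\<^sub>R \<alpha>) \<le> P x" for x
      using hom[of x] \<beta> by (simp add: inner_commute field_simps)
    show "P a - \<epsilon> \<le> a \<bullet> (- (1 / \<beta>) *\<^sub>R \<alpha>)"
      using below c0 \<beta> by (simp add: \<gamma> inner_commute field_simps)
  qed
qed

subsection \<open>The Clarke directional derivative\<close>

definition cont_subspace :: "'n set \<Rightarrow> (real^'n) set" where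
  "cont_subspace Iz = {s. \<forall>i\<in>Iz. s$i = 0}"

definition int_fiber :: "'n set \<Rightarrow> real^'n \<Rightarrow> (real^'n) set" where
  "int_fiber Iz x = {y. \<forall>i\<in>Iz. y$i = x$i}"

definition clarke_filter :: "'n set \<Rightarrow> real^'n \<Rightarrow> ((real^'n) \<times> real) filter" where
  "clarke_filter Iz x = inf (nhds x) (principal (int_fiber Iz x)) \<times>\<^sub>F at_right 0"

definition diff_quot :: "(real^'n \<Rightarrow> real) \<Rightarrow> real^'n \<Rightarrow> (real^'n) \<times> real \<Rightarrow> real" where
  "diff_quot h s z = (h (fst z + snd z *\<^sub>R s) - h (fst z)) / snd z"

lemma clarke_dd_eq_Limsup:
  "clarke_dd Iz h x s = Limsup (clarke_filter Iz x) (\<lambda>z. ereal (diff_quot h s z))"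
  unfolding clarke_dd_def clarke_filter_def diff_quot_def int_fiber_def
  by (intro arg_cong[where f="Limsup _"] ext) (simp add: split_beta)

lemma cont_subspace_add [simp]:
  "s \<in> cont_subspace Iz \<Longrightarrow> s' \<in> cont_subspace Iz \<Longrightarrow> s + s' \<in> cont_subspace Iz"
  and cont_subspace_scaleR [simp]: "s \<in> cont_subspace Iz \<Longrightarrow> c *\<^sub>R s \<in> cont_subspace Iz"
  and cont_subspace_zero [simp]: "0 \<in> cont_subspace Iz"
  by (simp_all add: cont_subspace_def)

lemma add_scaleR_mem_int_fiber:
  "y \<in> int_fiber Iz x \<Longrightarrow> s \<in> cont_subspace Iz \<Longrightarrow> y + t *\<^sub>R s \<in> int_fiber Iz x"
  by (simp add: int_fiber_def cont_subspace_def)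

lemma clarke_filter_neq_bot: "clarke_filter Iz x \<noteq> bot"
proof -
  have "\<not> eventually (\<lambda>y. y \<notin> int_fiber Iz x) (nhds x)"
    using eventually_nhds_x_imp_x by (force simp: int_fiber_def)
  then have "inf (nhds x) (principal (int_fiber Iz x)) \<noteq> bot"
    by (simp add: trivial_limit_def eventually_inf_principal)
  then show ?thesis
    by (simp add: clarke_filter_def prod_filter_eq_bot)
qed

lemma eventually_clarke_filter:
  "eventually (\<lambda>z. fst z \<in> int_fiber Iz x \<and> snd z > 0) (clarke_filter Iz x)"
  unfolding clarke_filter_def eventually_prod_filter
  by (intro exI[of _ "\<lambda>y. y \<in> int_fiber Iz x"] exI[of _ "\<lambda>t. t > 0"])
    (simp add: eventually_inf_principal eventually_at_right_less)

lemma filterlim_fst_clarke_filter: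
  "filterlim fst (inf (nhds x) (principal (int_fiber Iz x))) (clarke_filter Iz x)"
  and filterlim_snd_clarke_filter: "filterlim snd (at_right 0) (clarke_filter Iz x)"
  unfolding clarke_filter_def by (rule filterlim_fst filterlim_snd)+

lemma filterlim_clarke_filter_shift:
  assumes "s \<in> cont_subspace Iz"
  shows "filterlim (\<lambda>z. (fst z + snd z *\<^sub>R s, snd z)) (clarke_filter Iz x) (clarke_filter Iz x)"
proof -
  have "(fst \<longlongrightarrow> x) (clarke_filter Iz x)"
    by (rule filterlim_mono[OF filterlim_fst_clarke_filter inf_le1 order_refl])
  moreover have "(snd \<longlongrightarrow> 0) (clarke_filter Iz x)"
    by (rule filterlim_mono[OF filterlim_snd_clarke_filter at_within_le_nhds order_refl])
  ultimately have "((\<lambda>z. fst z + snd z *\<^sub>R s) \<longlongrightarrow> x + 0 *\<^sub>R s) (clarke_filter Iz x)"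
    by (intro tendsto_intros)
  moreover have "eventually (\<lambda>z. fst z + snd z *\<^sub>R s \<in> int_fiber Iz x) (clarke_filter Iz x)"
    using eventually_clarke_filter[of Iz x]
    by eventually_elim (use assms add_scaleR_mem_int_fiber in blast)
  ultimately have "filterlim (\<lambda>z. fst z + snd z *\<^sub>R s) (inf (nhds x) (principal (int_fiber Iz x)))
      (clarke_filter Iz x)"
    by (simp add: filterlim_inf filterlim_principal)
  from filterlim_Pair[OF this filterlim_snd_clarke_filter] show ?thesis
    unfolding clarke_filter_def .
qed

lemma filterlim_clarke_filter_scale:
  assumes "c > 0"
  shows "filterlim (\<lambda>z. (fst z, c * snd z)) (clarke_filter Iz x) (clarke_filter Iz x)"
proof -
  have "(snd \<longlongrightarrow> 0) (clarke_filter Iz x)"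
    by (rule filterlim_mono[OF filterlim_snd_clarke_filter at_within_le_nhds order_refl])
  then have "((\<lambda>z. c * snd z) \<longlongrightarrow> c * 0) (clarke_filter Iz x)"
    by (intro tendsto_intros)
  moreover have "eventually (\<lambda>z. c * snd z > 0) (clarke_filter Iz x)"
    using eventually_clarke_filter[of Iz x] by eventually_elim (use assms in auto)
  ultimately have "filterlim (\<lambda>z. c * snd z) (at_right 0) (clarke_filter Iz x)"
    by (simp add: tendsto_imp_filterlim_at_right)
  from filterlim_Pair[OF filterlim_fst_clarke_filter this] show ?thesis
    unfolding clarke_filter_def .
qed

lemma filterlim_clarke_filter_ray:
  "filterlim (\<lambda>t. (x, t)) (clarke_filter Iz x) (at_right 0)"
proof -
  have "filterlim (\<lambda>_. x) (inf (nhds x) (principal (int_fiber Iz x))) (at_right (0::real))"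
    by (simp add: filterlim_inf filterlim_principal int_fiber_def)
  from filterlim_Pair[OF this filterlim_ident] show ?thesis
    unfolding clarke_filter_def .
qed

definition cv_lipschitz :: "'n set \<Rightarrow> real \<Rightarrow> (real^'n \<Rightarrow> real) \<Rightarrow> bool" where
  "cv_lipschitz Iz L h \<longleftrightarrow> (\<forall>x y. (\<forall>i\<in>Iz. x$i = y$i) \<longrightarrow> \<bar>h x - h y\<bar> \<le> L * norm (x - y))"

lemma lipschitz_cont_vars_iff: "lipschitz_cont_vars Iz h \<longleftrightarrow> (\<exists>L. cv_lipschitz Iz L h)"
  unfolding lipschitz_cont_vars_def cv_lipschitz_def ..

lemma cv_lipschitzD:
  assumes "cv_lipschitz Iz L h" and "s \<in> cont_subspace Iz"
  shows "\<bar>h (y + t *\<^sub>R s) - h y\<bar> \<le> L * (\<bar>t\<bar> * norm s)"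
proof -
  have "\<forall>i\<in>Iz. (y + t *\<^sub>R s)$i = y$i"
    using assms(2) by (simp add: cont_subspace_def)
  with assms(1) have "\<bar>h (y + t *\<^sub>R s) - h y\<bar> \<le> L * norm (y + t *\<^sub>R s - y)"
    unfolding cv_lipschitz_def by blast
  then show ?thesis by simp
qed

lemma abs_diff_quot_le:
  assumes "cv_lipschitz Iz L h" and "s \<in> cont_subspace Iz" and "snd z > 0"
  shows "\<bar>diff_quot h s z\<bar> \<le> L * norm s"
  using cv_lipschitzD[OF assms(1,2), of "fst z" "snd z"] assms(3)
  by (simp add: diff_quot_def divide_le_eq mult.commute mult.left_commute)

lemma clarke_dd_bounds:
  assumes "cv_lipschitz Iz L h" and "s \<in> cont_subspace Iz"
  shows "ereal (- (L * norm s)) \<le> clarke_dd Iz h x s" and "clarke_dd Iz h x s \<le> ereal (L * norm s)"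
proof -
  have ev: "eventually (\<lambda>z. \<bar>diff_quot h s z\<bar> \<le> L * norm s) (clarke_filter Iz x)"
    using eventually_clarke_filter[of Iz x]
    by eventually_elim (use abs_diff_quot_le[OF assms] in auto)
  have "eventually (\<lambda>z. ereal (- (L * norm s)) \<le> ereal (diff_quot h s z)) (clarke_filter Iz x)"
    using ev by eventually_elim auto
  from le_Limsup[OF clarke_filter_neq_bot this] show "ereal (- (L * norm s)) \<le> clarke_dd Iz h x s"
    by (simp add: clarke_dd_eq_Limsup)
  have "eventually (\<lambda>z. ereal (diff_quot h s z) \<le> ereal (L * norm s)) (clarke_filter Iz x)"
    using ev by eventually_elim auto
  from Limsup_bounded[OF this] show "clarke_dd Iz h x s \<le> ereal (L * norm s)"
    by (simp add: clarke_dd_eq_Limsup)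
qed

definition clarke_deriv :: "'n set \<Rightarrow> (real^'n \<Rightarrow> real) \<Rightarrow> real^'n \<Rightarrow> real^'n \<Rightarrow> real" where
  "clarke_deriv Iz h x s = real_of_ereal (clarke_dd Iz h x s)"

lemma abs_clarke_deriv_le:
  assumes "cv_lipschitz Iz L h" and "s \<in> cont_subspace Iz"
  shows "\<bar>clarke_deriv Iz h x s\<bar> \<le> L * norm s"
  using clarke_dd_bounds[OF assms, of x] unfolding clarke_deriv_def
  by (cases "clarke_dd Iz h x s") auto

lemma clarke_dd_eq_ereal:
  assumes "lipschitz_cont_vars Iz h" and "s \<in> cont_subspace Iz"
  shows "clarke_dd Iz h x s = ereal (clarke_deriv Iz h x s)"
proof -
  obtain L where "cv_lipschitz Iz L h"
    using assms(1) lipschitz_cont_vars_iff by blast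
  from clarke_dd_bounds[OF this assms(2), of x] show ?thesis
    unfolding clarke_deriv_def by (cases "clarke_dd Iz h x s") auto
qed

lemma clarke_dd_le_ereal:
  assumes "\<And>r. r > A \<Longrightarrow> eventually (\<lambda>z. diff_quot h s z < r) (clarke_filter Iz x)"
  shows "clarke_dd Iz h x s \<le> ereal A"
  unfolding clarke_dd_eq_Limsup Limsup_le_iff
proof (intro allI impI)
  fix y :: ereal
  assume "y > ereal A"
  then show "eventually (\<lambda>z. y > ereal (diff_quot h s z)) (clarke_filter Iz x)"
    using assms by (cases y) (auto elim: eventually_mono)
qed

lemma eventually_diff_quot_less:
  assumes "clarke_dd Iz h x s < ereal r"
  shows "eventually (\<lambda>z. diff_quot h s z < r) (clarke_filter Iz x)"
  using Limsup_lessD[OF assms[unfolded clarke_dd_eq_Limsup]] by (auto elim: eventually_mono)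

lemma diff_quot_add:
  assumes "snd z \<noteq> 0"
  shows "diff_quot h (s + s') z = diff_quot h s' (fst z + snd z *\<^sub>R s, snd z) + diff_quot h s z"
  using assms unfolding diff_quot_def
  by (simp add: scaleR_add_right add.assoc add_divide_distrib[symmetric])

lemma diff_quot_scaleR:
  assumes "snd z \<noteq> 0" and "c \<noteq> 0"
  shows "diff_quot h (c *\<^sub>R s) z = c * diff_quot h s (fst z, c * snd z)"
  using assms unfolding diff_quot_def by (simp add: mult.commute)

lemma clarke_deriv_subadditive:
  assumes lip: "lipschitz_cont_vars Iz h" and s: "s \<in> cont_subspace Iz" and s': "s' \<in> cont_subspace Iz"
  shows "clarke_deriv Iz h x (s + s') \<le> clarke_deriv Iz h x s + clarke_deriv Iz h x s'"
proof -
  let ?A = "clarke_deriv Iz h x s" and ?B = "clarke_deriv Iz h x s'"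
  have "clarke_dd Iz h x (s + s') \<le> ereal (?A + ?B)"
  proof (rule clarke_dd_le_ereal)
    fix r assume "r > ?A + ?B"
    define e where "e = (r - ?A - ?B) / 2"
    have e: "e > 0" and r: "r = (?A + e) + (?B + e)"
      using \<open>r > ?A + ?B\<close> by (simp_all add: e_def)
    have "eventually (\<lambda>z. diff_quot h s z < ?A + e) (clarke_filter Iz x)"
      by (rule eventually_diff_quot_less) (use clarke_dd_eq_ereal[OF lip s] e in simp)
    moreover have "eventually (\<lambda>z. diff_quot h s' z < ?B + e) (clarke_filter Iz x)"
      by (rule eventually_diff_quot_less) (use clarke_dd_eq_ereal[OF lip s'] e in simp)
    then have "eventually (\<lambda>z. diff_quot h s' (fst z + snd z *\<^sub>R s, snd z) < ?B + e) (clarke_filter Iz x)"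
      using filterlim_clarke_filter_shift[OF s, of x] unfolding filterlim_iff by blast
    ultimately show "eventually (\<lambda>z. diff_quot h (s + s') z < r) (clarke_filter Iz x)"
      using eventually_clarke_filter[of Iz x]
      by eventually_elim (simp add: diff_quot_add r)
  qed
  then show ?thesis
    using clarke_dd_eq_ereal[OF lip cont_subspace_add[OF s s']] by simp
qed

lemma clarke_deriv_scaleR_le:
  assumes lip: "lipschitz_cont_vars Iz h" and s: "s \<in> cont_subspace Iz" and c: "c > 0"
  shows "clarke_deriv Iz h x (c *\<^sub>R s) \<le> c * clarke_deriv Iz h x s"
proof -
  let ?A = "clarke_deriv Iz h x s"
  have "clarke_dd Iz h x (c *\<^sub>R s) \<le> ereal (c * ?A)"
  proof (rule clarke_dd_le_ereal)
    fix r assume "r > c * ?A"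
    then have "eventually (\<lambda>z. diff_quot h s z < r / c) (clarke_filter Iz x)"
      by (intro eventually_diff_quot_less) (use clarke_dd_eq_ereal[OF lip s] c in \<open>simp add: field_simps\<close>)
    then have "eventually (\<lambda>z. diff_quot h s (fst z, c * snd z) < r / c) (clarke_filter Iz x)"
      using filterlim_clarke_filter_scale[OF c, of Iz x] unfolding filterlim_iff by blast
    then show "eventually (\<lambda>z. diff_quot h (c *\<^sub>R s) z < r) (clarke_filter Iz x)"
      using eventually_clarke_filter[of Iz x]
      by eventually_elim (use c in \<open>simp add: diff_quot_scaleR field_simps\<close>)
  qed
  then show ?thesis
    using clarke_dd_eq_ereal[OF lip cont_subspace_scaleR[OF s]] by simp
qed

lemma clarke_deriv_scaleR:
  assumes lip: "lipschitz_cont_vars Iz h" and s: "s \<in> cont_subspace Iz" and c: "c \<ge> 0"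
  shows "clarke_deriv Iz h x (c *\<^sub>R s) = c * clarke_deriv Iz h x s"
proof (cases "c = 0")
  case True
  obtain L where "cv_lipschitz Iz L h"
    using lip lipschitz_cont_vars_iff by blast
  from abs_clarke_deriv_le[OF this cont_subspace_zero, of x] True show ?thesis
    by simp
next
  case False
  with c have c: "c > 0" by simp
  have "clarke_deriv Iz h x s = clarke_deriv Iz h x ((1 / c) *\<^sub>R (c *\<^sub>R s))"
    using c by simp
  also have "\<dots> \<le> (1 / c) * clarke_deriv Iz h x (c *\<^sub>R s)"
    using c by (intro clarke_deriv_scaleR_le[OF lip]) (simp_all add: s)
  finally have "c * clarke_deriv Iz h x s \<le> clarke_deriv Iz h x (c *\<^sub>R s)"
    using c by (simp add: field_simps)
  with clarke_deriv_scaleR_le[OF lip s c, of x] show ?thesis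
    by linarith
qed

subsection \<open>The Clarke gradient\<close>

definition cont_proj :: "'n set \<Rightarrow> real^'n \<Rightarrow> real^'n" where
  "cont_proj Iz w = (\<chi> i. if i \<in> Iz then 0 else w$i)"

lemma cont_proj_mem [simp]: "cont_proj Iz w \<in> cont_subspace Iz"
  and cont_proj_add: "cont_proj Iz (w + w') = cont_proj Iz w + cont_proj Iz w'"
  and cont_proj_scaleR: "cont_proj Iz (c *\<^sub>R w) = c *\<^sub>R cont_proj Iz w"
  by (simp_all add: cont_proj_def cont_subspace_def vec_eq_iff)

lemma cont_proj_id: "s \<in> cont_subspace Iz \<Longrightarrow> cont_proj Iz s = s"
  by (simp add: cont_proj_def cont_subspace_def vec_eq_iff)

lemma inner_cont_proj: "s \<in> cont_subspace Iz \<Longrightarrow> s \<bullet> cont_proj Iz v = s \<bullet> v"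
  unfolding inner_vec_def by (rule sum.cong) (auto simp: cont_proj_def cont_subspace_def)

lemma mem_clarke_grad_iff:
  assumes "lipschitz_cont_vars Iz h"
  shows "v \<in> clarke_grad Iz h x \<longleftrightarrow>
    v \<in> cont_subspace Iz \<and> (\<forall>s\<in>cont_subspace Iz. s \<bullet> v \<le> clarke_deriv Iz h x s)"
  using clarke_dd_eq_ereal[OF assms]
  by (auto simp: clarke_grad_def cont_subspace_def)

text \<open>Finite-dimensional Hahn--Banach: the support function of the Clarke gradient is the
Clarke derivative.\<close>
lemma clarke_grad_almost_attains:
  assumes lip: "lipschitz_cont_vars Iz h" and a: "a \<in> cont_subspace Iz" and "\<epsilon> > 0"
  obtains v where "v \<in> clarke_grad Iz h x" and "clarke_deriv Iz h x a - \<epsilon> \<le> a \<bullet> v"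
proof -
  let ?P = "\<lambda>w. clarke_deriv Iz h x (cont_proj Iz w)"
  obtain v where v: "\<And>w. w \<bullet> v \<le> ?P w" and va: "?P a - \<epsilon> \<le> a \<bullet> v"
  proof (rule sublinear_minorant[of ?P])
    show "?P (w + w') \<le> ?P w + ?P w'" for w w'
      unfolding cont_proj_add by (rule clarke_deriv_subadditive[OF lip]) simp_all
    show "?P (c *\<^sub>R w) = c * ?P w" if "c \<ge> 0" for c w
      unfolding cont_proj_scaleR by (rule clarke_deriv_scaleR[OF lip _ that]) simp
  qed (use \<open>\<epsilon> > 0\<close> in auto)
  show thesis
  proof
    have "s \<bullet> cont_proj Iz v \<le> clarke_deriv Iz h x s" if "s \<in> cont_subspace Iz" for s
      using v[of s] that by (simp add: inner_cont_proj cont_proj_id)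
    then show "cont_proj Iz v \<in> clarke_grad Iz h x"
      by (simp add: mem_clarke_grad_iff[OF lip])
    show "clarke_deriv Iz h x a - \<epsilon> \<le> a \<bullet> cont_proj Iz v"
      using va by (simp add: inner_cont_proj[OF a] cont_proj_id[OF a])
  qed
qed

lemma clarke_grad_nonempty:
  assumes "lipschitz_cont_vars Iz h"
  shows "clarke_grad Iz h x \<noteq> {}"
  using clarke_grad_almost_attains[OF assms cont_subspace_zero zero_less_one] by blast

lemma clarke_deriv_le_if_grad_le:
  assumes lip: "lipschitz_cont_vars Iz h" and a: "a \<in> cont_subspace Iz"
    and bound: "\<And>v. v \<in> clarke_grad Iz h x \<Longrightarrow> a \<bullet> v \<le> b"
  shows "clarke_deriv Iz h x a \<le> b"
proof (rule field_le_epsilon)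
  fix \<epsilon> :: real assume "\<epsilon> > 0"
  then obtain v where "v \<in> clarke_grad Iz h x" and "clarke_deriv Iz h x a - \<epsilon> \<le> a \<bullet> v"
    using clarke_grad_almost_attains[OF lip a] by blast
  then show "clarke_deriv Iz h x a \<le> b + \<epsilon>"
    using bound by fastforce
qed

lemma clarke_grad_eq_Inter:
  assumes "lipschitz_cont_vars Iz h"
  shows "clarke_grad Iz h x = (\<Inter>i\<in>Iz. {v. axis i 1 \<bullet> v = 0}) \<inter>
    (\<Inter>s\<in>cont_subspace Iz. {v. s \<bullet> v \<le> clarke_deriv Iz h x s})"
  by (auto simp: mem_clarke_grad_iff[OF assms] cont_subspace_def inner_axis')

lemma convex_clarke_grad:
  assumes "lipschitz_cont_vars Iz h"
  shows "convex (clarke_grad Iz h x)"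
  unfolding clarke_grad_eq_Inter[OF assms]
  by (intro convex_Int convex_INT convex_hyperplane convex_halfspace_le)

lemma compact_clarke_grad:
  assumes lip: "lipschitz_cont_vars Iz h"
  shows "compact (clarke_grad Iz h x)"
proof -
  obtain L where L: "cv_lipschitz Iz L h"
    using lip lipschitz_cont_vars_iff by blast
  have "closed (clarke_grad Iz h x)"
    unfolding clarke_grad_eq_Inter[OF lip]
    by (intro closed_Int closed_INT ballI closed_hyperplane closed_halfspace_le)
  moreover have "clarke_grad Iz h x \<subseteq> cball 0 \<bar>L\<bar>"
  proof
    fix v assume v: "v \<in> clarke_grad Iz h x"
    then have vs: "v \<in> cont_subspace Iz"
      by (simp add: mem_clarke_grad_iff[OF lip])
    have "norm v * norm v = v \<bullet> v"
      by (simp add: norm_eq_sqrt_inner)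
    also have "\<dots> \<le> clarke_deriv Iz h x v"
      using v vs by (simp add: mem_clarke_grad_iff[OF lip])
    also have "\<dots> \<le> \<bar>L\<bar> * norm v"
      using abs_clarke_deriv_le[OF L vs, of x] abs_ge_self[of L]
      by (smt (verit) mult_right_mono norm_ge_zero)
    finally have "norm v \<le> \<bar>L\<bar>"
      by (cases "norm v = 0") (auto simp: mult_le_cancel_right)
    then show "v \<in> cball 0 \<bar>L\<bar>" by simp
  qed
  ultimately show ?thesis
    by (meson bounded_cball bounded_subset compact_eq_bounded_closed)
qed

lemma eventually_descent_of_clarke_dd_neg:
  assumes "clarke_dd Iz h x a < 0"
  shows "eventually (\<lambda>t. h (x + t *\<^sub>R a) < h x) (at_right 0)"
proof -
  have "eventually (\<lambda>z. diff_quot h a z < 0) (clarke_filter Iz x)"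
    using eventually_diff_quot_less[of Iz h x a 0] assms by (simp add: zero_ereal_def)
  then have "eventually (\<lambda>t. diff_quot h a (x, t) < 0) (at_right 0)"
    using filterlim_clarke_filter_ray[of x Iz] unfolding filterlim_iff by blast
  then show ?thesis
    using eventually_at_right_less[of 0]
    by eventually_elim (simp add: diff_quot_def divide_less_0_iff)
qed

subsection \<open>Descent at a local Pareto optimum\<close>

lemma tendsto_along_cont_dir:
  assumes "lipschitz_cont_vars Iz h" and "a \<in> cont_subspace Iz"
  shows "((\<lambda>t. h (x + t *\<^sub>R a)) \<longlongrightarrow> h x) (at_right 0)"
proof -
  obtain L where L: "cv_lipschitz Iz L h"
    using assms(1) lipschitz_cont_vars_iff by blast
  have "eventually (\<lambda>t. norm (h (x + t *\<^sub>R a) - h x) \<le> L * (\<bar>t\<bar> * norm a)) (at_right 0)"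
    using cv_lipschitzD[OF L assms(2)] by simp
  moreover have "((\<lambda>t. L * (\<bar>t\<bar> * norm a)) \<longlongrightarrow> 0) (at_right 0)"
    by (auto intro!: tendsto_eq_intros)
  ultimately show ?thesis
    by (rule LIM_zero_cancel[OF Lim_null_comparison])
qed

lemma eventually_ray_le:
  fixes \<xi> \<alpha> c :: real
  assumes "\<xi> \<le> c" and "\<xi> = c \<Longrightarrow> \<alpha> \<le> 0"
  shows "eventually (\<lambda>t. \<xi> + t * \<alpha> \<le> c) (at_right 0)"
proof (cases "\<xi> < c")
  case True
  have "((\<lambda>t. \<xi> + t * \<alpha>) \<longlongrightarrow> \<xi>) (at_right 0)"
    by (auto intro!: tendsto_eq_intros)
  from order_tendstoD(2)[OF this True] show ?thesis
    by (auto elim: eventually_mono)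
next
  case False
  then show ?thesis
    using assms eventually_at_right_less[of 0] by (auto elim!: eventually_mono simp: mult_nonneg_nonpos)
qed

lemma cont_dirs_bound_signs:
  assumes "a \<in> cont_dirs l u Ic Iz x" and "Ic \<union> Iz = UNIV"
  shows "x$i = u$i \<Longrightarrow> a$i \<le> 0" and "x$i = l$i \<Longrightarrow> a$i \<ge> 0"
  using assms by (auto simp: cont_dirs_def)

lemma eventually_in_box_along_cont_dir:
  assumes "x \<in> box_set l u" and "a \<in> cont_dirs l u Ic Iz x" and "Ic \<union> Iz = UNIV"
  shows "eventually (\<lambda>t. x + t *\<^sub>R a \<in> box_set l u) (at_right 0)"
  unfolding box_set_def mem_Collect_eq
proof (rule eventually_all_finite)
  fix i
  have "eventually (\<lambda>t. x$i + t * a$i \<le> u$i) (at_right 0)"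
    using assms cont_dirs_bound_signs(1) by (intro eventually_ray_le) (auto simp: box_set_def)
  moreover have "eventually (\<lambda>t. - x$i + t * - a$i \<le> - l$i) (at_right 0)"
    using assms cont_dirs_bound_signs(2) by (intro eventually_ray_le) (auto simp: box_set_def)
  ultimately show "eventually (\<lambda>t. l$i \<le> (x + t *\<^sub>R a)$i \<and> (x + t *\<^sub>R a)$i \<le> u$i) (at_right 0)"
    by eventually_elim simp
qed

lemma sqrt_sum_sq_le_norm:
  fixes w :: "real^'n"
  shows "sqrt (\<Sum>i\<in>I. (w$i)\<^sup>2) \<le> norm w"
proof -
  have "(\<Sum>i\<in>I. (w$i)\<^sup>2) \<le> (\<Sum>i\<in>UNIV. (w$i)\<^sup>2)"
    by (rule sum_mono2) auto
  then show ?thesis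
    by (simp add: norm_vec_def L2_set_def)
qed

lemma cont_dirs_subspace: "d \<in> cont_dirs l u Ic Iz x \<Longrightarrow> d \<in> cont_subspace Iz"
  by (simp add: cont_dirs_def cont_subspace_def)

text \<open>Inactive constraints stay negative along the direction by continuity, so descent is only
required of the active ones.\<close>
lemma local_pareto_opt_no_descent_dir:
  assumes q: "q \<ge> 1" and IcIz: "Ic \<union> Iz = UNIV"
    and lipg: "\<forall>j<m. lipschitz_cont_vars Iz (g j)"
    and opt: "local_pareto_opt l u Ic Iz q f m g x"
    and a: "a \<in> cont_dirs l u Ic Iz x"
    and descent_f: "\<forall>i<q. eventually (\<lambda>t. f i (x + t *\<^sub>R a) < f i x) (at_right 0)"
    and descent_g: "\<forall>j<m. g j x = 0 \<longrightarrow> eventually (\<lambda>t. g j (x + t *\<^sub>R a) < g j x) (at_right 0)"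
  shows False
proof -
  obtain \<rho> where "\<rho> > 0"
    and no_better: "\<not> (\<exists>y \<in> cont_nbhd l u Ic Iz x \<rho> \<inter> feasible_set l u Iz m g. pareto_le q f y x)"
    using opt by (auto simp: local_pareto_opt_def)
  have xF: "x \<in> feasible_set l u Iz m g"
    using opt by (simp add: local_pareto_opt_def)
  have as: "a \<in> cont_subspace Iz"
    using a by (rule cont_dirs_subspace)
  have "eventually (\<lambda>t. \<forall>i\<in>{..<q}. f i (x + t *\<^sub>R a) < f i x) (at_right 0)"
    using descent_f by (intro eventually_ball_finite) auto
  moreover have "eventually (\<lambda>t. \<forall>j\<in>{..<m}. g j (x + t *\<^sub>R a) \<le> 0) (at_right 0)"
  proof (intro eventually_ball_finite ballI)
    fix j assume j: "j \<in> {..<m}"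
    show "eventually (\<lambda>t. g j (x + t *\<^sub>R a) \<le> 0) (at_right 0)"
    proof (cases "g j x = 0")
      case True
      with descent_g j have "eventually (\<lambda>t. g j (x + t *\<^sub>R a) < 0) (at_right 0)"
        by simp
      then show ?thesis
        by (rule eventually_mono) simp
    next
      case False
      with xF j have "g j x < 0"
        by (force simp: feasible_set_def)
      moreover have "((\<lambda>t. g j (x + t *\<^sub>R a)) \<longlongrightarrow> g j x) (at_right 0)"
        using lipg j as by (intro tendsto_along_cont_dir) auto
      ultimately have "eventually (\<lambda>t. g j (x + t *\<^sub>R a) < 0) (at_right 0)"
        by (simp add: order_tendstoD(2))
      then show ?thesis
        by (rule eventually_mono) simp
    qed
  qed simp
  moreover have "eventually (\<lambda>t. x + t *\<^sub>R a \<in> box_set l u) (at_right 0)"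
    using xF a IcIz by (intro eventually_in_box_along_cont_dir) (simp_all add: feasible_set_def)
  moreover have "eventually (\<lambda>t. norm (t *\<^sub>R a) < \<rho>) (at_right 0)"
    using \<open>\<rho> > 0\<close> by (intro order_tendstoD(2)) (auto intro!: tendsto_eq_intros)
  ultimately have "eventually (\<lambda>t. pareto_le q f (x + t *\<^sub>R a) x \<and>
      x + t *\<^sub>R a \<in> cont_nbhd l u Ic Iz x \<rho> \<inter> feasible_set l u Iz m g) (at_right 0)"
  proof eventually_elim
    case (elim t)
    let ?y = "x + t *\<^sub>R a"
    have fiber: "\<forall>i\<in>Iz. a$i = 0"
      using as by (simp add: cont_subspace_def)
    have "pareto_le q f ?y x"
      using elim(1) q unfolding pareto_le_def
      by (metis less_imp_le lessThan_iff less_le_trans less_numeral_extra(1) order_less_irrefl)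
    moreover have "?y \<in> feasible_set l u Iz m g"
      using xF elim(2,3) fiber by (auto simp: feasible_set_def int_set_def)
    moreover have "?y \<in> cont_nbhd l u Ic Iz x \<rho>"
      using elim(3,4) fiber sqrt_sum_sq_le_norm[of "t *\<^sub>R a" Ic] by (simp add: cont_nbhd_def)
    ultimately show ?case by simp
  qed
  with no_better show False
    using eventually_happens'[OF trivial_limit_at_right_real] by blast
qed

subsection \<open>Dual cones\<close>

definition dual_cone :: "'a::real_inner set \<Rightarrow> 'a set" where
  "dual_cone D = {\<xi>. \<forall>d\<in>D. 0 \<le> \<xi> \<bullet> d}"

lemma convex_dual_cone: "convex (dual_cone D)"
  and closed_dual_cone: "closed (dual_cone D)"
proof -
  have eq: "dual_cone D = (\<Inter>d\<in>D. {\<xi>. d \<bullet> \<xi> \<ge> 0})"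
    by (auto simp: dual_cone_def inner_commute)
  show "convex (dual_cone D)"
    unfolding eq by (intro convex_INT convex_halfspace_ge)
  show "closed (dual_cone D)"
    unfolding eq by (intro closed_INT ballI closed_halfspace_ge)
qed

lemma separate_compact_from_dual_cone:
  fixes C :: "'a::euclidean_space set"
  assumes "convex C" and "compact C" and "C \<noteq> {}" and "C \<inter> dual_cone D = {}"
  obtains a b where "b < 0" and "\<And>\<xi>. \<xi> \<in> C \<Longrightarrow> a \<bullet> \<xi> < b"
    and "\<And>\<eta>. \<eta> \<in> dual_cone D \<Longrightarrow> 0 \<le> a \<bullet> \<eta>"
proof -
  obtain a b where C: "\<forall>\<xi>\<in>C. a \<bullet> \<xi> < b" and K: "\<forall>\<eta>\<in>dual_cone D. a \<bullet> \<eta> > b"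
    using separating_hyperplane_compact_closed[OF assms(1-3) convex_dual_cone closed_dual_cone assms(4)]
    by blast
  have "0 \<in> dual_cone D"
    by (simp add: dual_cone_def)
  with K have "b < 0" by force
  moreover have "0 \<le> a \<bullet> \<eta>" if \<eta>: "\<eta> \<in> dual_cone D" for \<eta>
  proof (rule ccontr)
    assume "\<not> 0 \<le> a \<bullet> \<eta>"
    then have neg: "a \<bullet> \<eta> < 0" by simp
    have "(b / (a \<bullet> \<eta>)) *\<^sub>R \<eta> \<in> dual_cone D"
      using \<eta> neg \<open>b < 0\<close> by (auto simp: dual_cone_def intro!: divide_nonpos_neg mult_nonpos_nonneg)
    with K have "b < a \<bullet> ((b / (a \<bullet> \<eta>)) *\<^sub>R \<eta>)" by blast
    then show False
      using neg by simp
  qed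
  ultimately show thesis
    using C that by blast
qed

text \<open>The bidual of the cone of feasible continuous directions is the cone itself; the coordinate
axes \<open>\<pm>e\<^sub>i\<close> in the dual cone already force every sign condition.\<close>
lemma mem_cont_dirs_if_nonneg_on_dual:
  assumes "\<And>\<eta>. \<eta> \<in> dual_cone (cont_dirs l u Ic Iz x) \<Longrightarrow> 0 \<le> a \<bullet> \<eta>"
  shows "a \<in> cont_dirs l u Ic Iz x"
proof -
  have axis: "c * a$i \<ge> 0" if "\<forall>d\<in>cont_dirs l u Ic Iz x. 0 \<le> c * d$i" for i c
    using assms[of "axis i c"] that by (simp add: dual_cone_def inner_axis' inner_axis mult.commute)
  show ?thesis
    unfolding cont_dirs_def mem_Collect_eq
  proof (intro conjI ballI impI)
    fix i assume "i \<in> Iz"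
    then have "1 * a$i \<ge> 0" and "-1 * a$i \<ge> 0"
      by (intro axis; simp add: cont_dirs_def)+
    then show "a$i = 0" by simp
  next
    fix i assume "i \<in> Ic" "x$i = l$i"
    then have "1 * a$i \<ge> 0"
      by (intro axis) (simp add: cont_dirs_def)
    then show "a$i \<ge> 0" by simp
  next
    fix i assume "i \<in> Ic" "x$i = u$i"
    then have "-1 * a$i \<ge> 0"
      by (intro axis) (simp add: cont_dirs_def)
    then show "a$i \<le> 0" by simp
  qed
qed

subsection \<open>Multipliers\<close>

definition active_constraints :: "nat \<Rightarrow> (nat \<Rightarrow> real^'n \<Rightarrow> real) \<Rightarrow> real^'n \<Rightarrow> nat set" where
  "active_constraints m g x = {j. j < m \<and> g j x = 0}"

definition crit_indices :: "nat \<Rightarrow> nat \<Rightarrow> (nat \<Rightarrow> real^'n \<Rightarrow> real) \<Rightarrow> real^'n \<Rightarrow> (nat + nat) set" where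
  "crit_indices q m g x = Inl ` {..<q} \<union> Inr ` active_constraints m g x"

definition grad_hull :: "'n set \<Rightarrow> nat \<Rightarrow> (nat \<Rightarrow> real^'n \<Rightarrow> real) \<Rightarrow> nat \<Rightarrow>
    (nat \<Rightarrow> real^'n \<Rightarrow> real) \<Rightarrow> real^'n \<Rightarrow> (real^'n) set" where
  "grad_hull Iz q f m g x =
     convex hull (\<Union>k\<in>crit_indices q m g x. clarke_grad Iz (case_sum f g k) x)"

lemma finite_crit_indices: "finite (crit_indices q m g x)"
  by (simp add: crit_indices_def active_constraints_def)

lemma convex_grad_hull: "convex (grad_hull Iz q f m g x)"
  unfolding grad_hull_def by (rule convex_convex_hull)

lemma lipschitz_cont_vars_crit_indices:
  assumes "\<forall>i<q. lipschitz_cont_vars Iz (f i)" and "\<forall>j<m. lipschitz_cont_vars Iz (g j)"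
    and "k \<in> crit_indices q m g x"
  shows "lipschitz_cont_vars Iz (case_sum f g k)"
  using assms by (auto simp: crit_indices_def active_constraints_def)

lemma sum_crit_indices:
  "(\<Sum>k\<in>crit_indices q m g x. F k) =
     (\<Sum>i<q. F (Inl i)) + (\<Sum>j<m. if j \<in> active_constraints m g x then F (Inr j) else 0)"
proof -
  have "(\<Sum>j\<in>active_constraints m g x. F (Inr j)) =
      (\<Sum>j<m. if j \<in> active_constraints m g x then F (Inr j) else 0)"
    by (subst sum.inter_restrict[symmetric]) (auto intro: sum.cong simp: active_constraints_def)
  then show ?thesis
    unfolding crit_indices_def
    by (subst sum.union_disjoint) (auto simp: sum.reindex active_constraints_def)
qed

lemma grad_hull_meets_dual_cone:
  assumes q: "q \<ge> 1" and IcIz: "Ic \<union> Iz = UNIV"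
    and lipf: "\<forall>i<q. lipschitz_cont_vars Iz (f i)" and lipg: "\<forall>j<m. lipschitz_cont_vars Iz (g j)"
    and opt: "local_pareto_opt l u Ic Iz q f m g x"
  shows "grad_hull Iz q f m g x \<inter> dual_cone (cont_dirs l u Ic Iz x) \<noteq> {}"
proof
  let ?I = "crit_indices q m g x" and ?G = "\<lambda>k. clarke_grad Iz (case_sum f g k) x"
  note lip = lipschitz_cont_vars_crit_indices[OF lipf lipg]
  assume disjoint: "grad_hull Iz q f m g x \<inter> dual_cone (cont_dirs l u Ic Iz x) = {}"
  have "compact (grad_hull Iz q f m g x)"
    unfolding grad_hull_def
    by (intro compact_convex_hull compact_UN finite_crit_indices compact_clarke_grad lip)
  moreover have "grad_hull Iz q f m g x \<noteq> {}"
  proof -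
    have I0: "Inl 0 \<in> ?I"
      using q by (simp add: crit_indices_def)
    obtain v where "v \<in> ?G (Inl 0)"
      using clarke_grad_nonempty[OF lip[OF I0]] by blast
    with I0 have "v \<in> grad_hull Iz q f m g x"
      unfolding grad_hull_def by (intro hull_inc UN_I)
    then show ?thesis by blast
  qed
  ultimately obtain a b where "b < 0" and below: "\<And>\<xi>. \<xi> \<in> grad_hull Iz q f m g x \<Longrightarrow> a \<bullet> \<xi> < b"
    and dual: "\<And>\<eta>. \<eta> \<in> dual_cone (cont_dirs l u Ic Iz x) \<Longrightarrow> 0 \<le> a \<bullet> \<eta>"
    by (rule separate_compact_from_dual_cone[OF convex_grad_hull _ _ disjoint]) blast
  have a: "a \<in> cont_dirs l u Ic Iz x"
    using dual by (rule mem_cont_dirs_if_nonneg_on_dual)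
  have descent: "eventually (\<lambda>t. case_sum f g k (x + t *\<^sub>R a) < case_sum f g k x) (at_right 0)"
    if k: "k \<in> ?I" for k
  proof -
    have "clarke_deriv Iz (case_sum f g k) x a \<le> b"
    proof (rule clarke_deriv_le_if_grad_le[OF lip[OF k] cont_dirs_subspace[OF a]])
      fix v assume "v \<in> ?G k"
      with k have "v \<in> grad_hull Iz q f m g x"
        unfolding grad_hull_def by (intro hull_inc UN_I)
      then show "a \<bullet> v \<le> b"
        using below[of v] by simp
    qed
    with \<open>b < 0\<close> have "clarke_dd Iz (case_sum f g k) x a < 0"
      using clarke_dd_eq_ereal[OF lip[OF k] cont_dirs_subspace[OF a]] by simp
    then show ?thesis
      by (rule eventually_descent_of_clarke_dd_neg)
  qed
  show False
  proof (rule local_pareto_opt_no_descent_dir[OF q IcIz lipg opt a]; intro allI impI)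
    fix i assume "i < q"
    then show "eventually (\<lambda>t. f i (x + t *\<^sub>R a) < f i x) (at_right 0)"
      using descent[of "Inl i"] by (simp add: crit_indices_def)
  next
    fix j assume "j < m" and "g j x = 0"
    then show "eventually (\<lambda>t. g j (x + t *\<^sub>R a) < g j x) (at_right 0)"
      using descent[of "Inr j"] by (simp add: crit_indices_def active_constraints_def)
  qed
qed

lemma grad_hull_multipliers:
  assumes \<xi>: "\<xi> \<in> grad_hull Iz q f m g x"
    and lipf: "\<forall>i<q. lipschitz_cont_vars Iz (f i)" and lipg: "\<forall>j<m. lipschitz_cont_vars Iz (g j)"
  obtains \<sigma> lam :: "nat \<Rightarrow> real" and vf vg where "\<forall>i<q. 0 \<le> \<sigma> i" and "\<forall>j<m. 0 \<le> lam j"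
    and "\<forall>j<m. g j x \<noteq> 0 \<longrightarrow> lam j = 0" and "(\<Sum>i<q. \<sigma> i) + (\<Sum>j<m. lam j) = 1"
    and "\<forall>i<q. vf i \<in> clarke_grad Iz (f i) x" and "\<forall>j<m. vg j \<in> clarke_grad Iz (g j) x"
    and "\<xi> = (\<Sum>i<q. \<sigma> i *\<^sub>R vf i) + (\<Sum>j<m. lam j *\<^sub>R vg j)"
proof -
  let ?A = "active_constraints m g x"
  note lip = lipschitz_cont_vars_crit_indices[OF lipf lipg]
  have "grad_hull Iz q f m g x = {\<Sum>k\<in>crit_indices q m g x. c k *\<^sub>R s k | c s.
      (\<forall>k\<in>crit_indices q m g x. 0 \<le> c k) \<and> sum c (crit_indices q m g x) = 1 \<and>
      (\<forall>k\<in>crit_indices q m g x. s k \<in> clarke_grad Iz (case_sum f g k) x)}"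
    unfolding grad_hull_def
    by (intro convex_hull_finite_union finite_crit_indices ballI conjI convex_clarke_grad
        clarke_grad_nonempty lip)
  with \<xi> obtain c s where c: "\<forall>k\<in>crit_indices q m g x. 0 \<le> c k"
    and c1: "sum c (crit_indices q m g x) = 1"
    and s: "\<forall>k\<in>crit_indices q m g x. s k \<in> clarke_grad Iz (case_sum f g k) x"
    and \<xi>_eq: "\<xi> = (\<Sum>k\<in>crit_indices q m g x. c k *\<^sub>R s k)"
    by blast
  have sf: "\<forall>i<q. s (Inl i) \<in> clarke_grad Iz (f i) x"
    and sg: "\<forall>j\<in>?A. s (Inr j) \<in> clarke_grad Iz (g j) x"
    using s unfolding crit_indices_def ball_Un Ball_image_comp by (simp_all add: comp_def)
  define lam where "lam j = (if j \<in> ?A then c (Inr j) else 0)" for j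
  define vg where "vg j = (if j \<in> ?A then s (Inr j) else (SOME v. v \<in> clarke_grad Iz (g j) x))" for j
  show thesis
  proof
    show "\<forall>i<q. 0 \<le> c (Inl i)" and "\<forall>j<m. 0 \<le> lam j" and "\<forall>j<m. g j x \<noteq> 0 \<longrightarrow> lam j = 0"
      using c by (auto simp: lam_def crit_indices_def active_constraints_def)
    show "(\<Sum>i<q. c (Inl i)) + (\<Sum>j<m. lam j) = 1"
      using c1 by (simp add: sum_crit_indices lam_def)
    show "\<forall>i<q. s (Inl i) \<in> clarke_grad Iz (f i) x"
      by (rule sf)
    show "\<forall>j<m. vg j \<in> clarke_grad Iz (g j) x"
    proof (intro allI impI)
      fix j assume "j < m"
      with lipg have "clarke_grad Iz (g j) x \<noteq> {}"
        by (simp add: clarke_grad_nonempty)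
      with sg show "vg j \<in> clarke_grad Iz (g j) x"
        by (simp add: vg_def some_in_eq)
    qed
    show "\<xi> = (\<Sum>i<q. c (Inl i) *\<^sub>R s (Inl i)) + (\<Sum>j<m. lam j *\<^sub>R vg j)"
      unfolding \<xi>_eq sum_crit_indices by (auto intro: sum.cong simp: lam_def vg_def)
  qed
qed

lemma weighted_sum_neg:
  fixes w y :: "'a \<Rightarrow> real"
  assumes "finite A" and w: "\<forall>j\<in>A. 0 \<le> w j" and "sum w A = 1"
    and y: "\<forall>j\<in>A. w j \<noteq> 0 \<longrightarrow> y j < 0"
  shows "(\<Sum>j\<in>A. w j * y j) < 0"
proof -
  have "\<not> (\<forall>j\<in>A. w j = 0)"
    using \<open>sum w A = 1\<close> by (metis sum.neutral zero_neq_one)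
  then obtain j0 where "j0 \<in> A" and "w j0 \<noteq> 0"
    by blast
  have "(\<Sum>j\<in>A. w j * y j) < (\<Sum>j\<in>A. 0)"
  proof (rule sum_strict_mono_ex1[OF \<open>finite A\<close>])
    show "\<forall>j\<in>A. w j * y j \<le> 0"
      using w y by (metis less_imp_le mult_eq_0_iff mult_nonneg_nonpos order_refl)
    show "\<exists>j\<in>A. w j * y j < 0"
      using \<open>j0 \<in> A\<close> \<open>w j0 \<noteq> 0\<close> w y by (intro bexI[of _ j0] mult_pos_neg) auto
  qed
  then show ?thesis by simp
qed

lemma pareto_clarke_stationary_of_grad_hull:
  assumes xF: "x \<in> feasible_set l u Iz m g"
    and lipf: "\<forall>i<q. lipschitz_cont_vars Iz (f i)" and lipg: "\<forall>j<m. lipschitz_cont_vars Iz (g j)"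
    and d0: "d0 \<in> cont_dirs l u Ic Iz x"
    and cq: "\<forall>j<m. g j x = 0 \<longrightarrow> (\<forall>\<xi>\<in>clarke_grad Iz (g j) x. \<xi> \<bullet> d0 < 0)"
    and \<xi>: "\<xi> \<in> grad_hull Iz q f m g x \<inter> dual_cone (cont_dirs l u Ic Iz x)"
  shows "pareto_clarke_stationary l u Ic Iz q f m g x"
proof -
  obtain \<sigma> lam vf vg where \<sigma>: "\<forall>i<q. 0 \<le> \<sigma> i" and lam: "\<forall>j<m. 0 \<le> lam j"
    and inactive: "\<forall>j<m. g j x \<noteq> 0 \<longrightarrow> lam j = 0" and total: "(\<Sum>i<q. \<sigma> i) + (\<Sum>j<m. lam j) = 1"
    and vf: "\<forall>i<q. vf i \<in> clarke_grad Iz (f i) x" and vg: "\<forall>j<m. vg j \<in> clarke_grad Iz (g j) x"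
    and \<xi>_eq: "\<xi> = (\<Sum>i<q. \<sigma> i *\<^sub>R vf i) + (\<Sum>j<m. lam j *\<^sub>R vg j)"
    using grad_hull_multipliers[OF _ lipf lipg] \<xi> by blast
  have "\<exists>i<q. \<sigma> i \<noteq> 0"
  proof (rule ccontr)
    assume "\<not> (\<exists>i<q. \<sigma> i \<noteq> 0)"
    then have \<sigma>0: "\<forall>i<q. \<sigma> i = 0" by simp
    have "\<xi> \<bullet> d0 = (\<Sum>j<m. lam j * (vg j \<bullet> d0))"
      using \<sigma>0 by (simp add: \<xi>_eq inner_sum_left)
    also have "\<dots> < 0"
      using lam total \<sigma>0 inactive cq vg by (intro weighted_sum_neg) auto
    finally have "\<xi> \<bullet> d0 < 0" .
    moreover have "0 \<le> \<xi> \<bullet> d0"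
      using \<xi> d0 by (simp add: dual_cone_def)
    ultimately show False by simp
  qed
  moreover have "\<forall>j<m. 0 \<le> lam j \<and> lam j * g j x = 0"
    using lam inactive by auto
  moreover have "\<forall>d\<in>cont_dirs l u Ic Iz x. 0 \<le> ((\<Sum>i<q. \<sigma> i *\<^sub>R vf i) + (\<Sum>j<m. lam j *\<^sub>R vg j)) \<bullet> d"
    using \<xi> by (simp add: \<xi>_eq dual_cone_def)
  ultimately show ?thesis
    unfolding pareto_clarke_stationary_def using xF \<sigma> vf vg by blast
qed

theorem mainTheorem1:
  fixes l u x :: "real^'n" and Ic Iz :: "'n set"
    and q m :: nat and f g :: "nat \<Rightarrow> real^'n \<Rightarrow> real"
  assumes "q \<ge> 1"
    and "Ic \<union> Iz = UNIV" and "Ic \<inter> Iz = {}" and "Ic \<noteq> {}" and "Iz \<noteq> {}"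
    and "\<forall>i. l$i < u$i"
    and "\<forall>i\<in>Iz. l$i \<in> \<int> \<and> u$i \<in> \<int>"
    and "\<forall>i<q. lipschitz_cont_vars Iz (f i)"
    and "\<forall>j<m. lipschitz_cont_vars Iz (g j)"
    and "local_pareto_opt l u Ic Iz q f m g x"
    and "\<exists>d \<in> cont_dirs l u Ic Iz x. \<forall>j<m. g j x = 0 \<longrightarrow>
           (\<forall>\<xi> \<in> clarke_grad Iz (g j) x. \<xi> \<bullet> d < 0)"
  shows "pareto_stationary l u Ic Iz q f m g x"
proof -
  obtain d0 where d0: "d0 \<in> cont_dirs l u Ic Iz x"
    and cq: "\<forall>j<m. g j x = 0 \<longrightarrow> (\<forall>\<xi>\<in>clarke_grad Iz (g j) x. \<xi> \<bullet> d0 < 0)"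
    using assms(11) by blast
  obtain \<xi> where "\<xi> \<in> grad_hull Iz q f m g x \<inter> dual_cone (cont_dirs l u Ic Iz x)"
    using grad_hull_meets_dual_cone[OF assms(1,2,8,9,10)] by blast
  moreover have "x \<in> feasible_set l u Iz m g"
    using assms(10) by (simp add: local_pareto_opt_def)
  ultimately have "pareto_clarke_stationary l u Ic Iz q f m g x"
    using pareto_clarke_stationary_of_grad_hull[OF _ assms(8,9) d0 cq] by blast
  with assms(10) show ?thesis
    by (simp add: pareto_stationary_def local_pareto_opt_def)
qed

end
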